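(* For a regular language $L\subseteq\Sigma^*$, the following three conditions are equivalent: (A) the syntactic monoid $M$ of $L$ satisfies $yx^{\omega+1}=x^{\omega+1}y$ for all $x,y\in M$, and for all words $x,y,z\in\Sigma^*$ and every non-neutral letter $a$, if $y\in L$ then $xyza^\omega\in L$; (B) there is $p\in\mathbb{N}$ such that for every word $u\in\Sigma^*$, letting $T$ be the set of non-neutral letters $a$ with $|u|_a\ge p$, either $T=\emptyset$ or ($u_{-T}\in \mathrm{Cond}(T)$ iff $u\in L$); (C) there is $p\in\mathbb{N}$ such that for all words $u,v\in\Sigma^*$, letting $T$ be the set of non-neutral letters $a$ with $|u|_a\ge p$, if $v\in L$, $T\neq\emptyset$ and $v_{-T}$ is a factor of $u_{-T}$, then $u\in L$.
   Context: $\Sigma$ is a finite alphabet. A letter $e$ is neutral for $L$ if for all $s,t\in\Sigma^*$, $st\in L$ iff $set\in L$; "non-neutral" means not neutral for $L$. $|u|_a$ is the number of occurrences of $a$ in $u$. $u$ is a factor of $v$ if $v=sut$ for some words $s,t$. For $S\subseteq\Sigma$, $u_{-S}$ is the word obtained from $u$ by deleting all letters of $S$. For a non-empty set $S$ of non-neutral letters, $\mathrm{Cond}(S)$ is the set of words $u\in\Sigma^*$ for which there is $v\in L$ such that $v_{-S}$ is a factor of $u_{-S}$. The syntactic monoid $M$ of $L$ is $\Sigma^*$ quotiented by the congruence $u\sim_L v$ iff ($sut\in L\Leftrightarrow svt\in L$ for all $s,t\in\Sigma^*$); $\omega$ is its idempotent power ($x^\omega x^\omega=x^\omega$ for all $x\in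 M$), and $a^\omega$ denotes the letter $a$ repeated $\omega$ times. *)

theory Defs
  imports Main
begin

definition regular :: "'a list set \<Rightarrow> bool" where
  "regular L \<longleftrightarrow> (\<exists>(Q::nat set) q0 (\<delta>::nat \<Rightarrow> 'a \<Rightarrow> nat) F.
      finite Q \<and> q0 \<in> Q \<and> F \<subseteq> Q \<and> (\<forall>q\<in>Q. \<forall>c. \<delta> q c \<in> Q) \<and>
      L = {w. foldl \<delta> q0 w \<in> F})"

definition syn_equiv :: "'a list set \<Rightarrow> 'a list \<Rightarrow> 'a list \<Rightarrow> bool" where
  "syn_equiv L u v \<longleftrightarrow> (\<forall>s t. s @ u @ t \<in> L \<longleftrightarrow> s @ v @ t \<in> L)"

definition wpow :: "'a list \<Rightarrow> nat \<Rightarrow> 'a list" where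
  "wpow u n = concat (replicate n u)"

text \<open>The idempotent power omega of the syntactic monoid: a positive exponent n
  with x^n x^n ~ x^n for every element x (exists since M is finite for regular L).\<close>
definition syn_omega :: "'a list set \<Rightarrow> nat" where
  "syn_omega L = (SOME n. 0 < n \<and> (\<forall>x. syn_equiv L (wpow x n @ wpow x n) (wpow x n)))"

definition neutral :: "'a list set \<Rightarrow> 'a \<Rightarrow> bool" where
  "neutral L e \<longleftrightarrow> (\<forall>s t. s @ t \<in> L \<longleftrightarrow> s @ [e] @ t \<in> L)"

definition factor :: "'a list \<Rightarrow> 'a list \<Rightarrow> bool" where
  "factor u v \<longleftrightarrow> (\<exists>s t. v = s @ u @ t)"

definition erase :: "'a set \<Rightarrow> 'a list \<Rightarrow> 'a list" where
  "erase S u = filter (\<lambda>c. c \<notin> S) u"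

definition Cond :: "'a list set \<Rightarrow> 'a set \<Rightarrow> 'a list set" where
  "Cond L S = {u. \<exists>v\<in>L. factor (erase S v) (erase S u)}"

end

(*
  (A) implies (C).  Let K be the number of syntactic classes and take p = K + 1.  If a letter a
  occurs more than K times in u, two prefixes of u ending just before an occurrence of a are
  equivalent, so u = P (a k) R with P ~ P (a k); as (a k)^\<omega> is central and absorbs a^\<omega>, this gives
  u a^\<omega> ~ u.  For a word absorbing a^\<omega> for every a in T, centrality of a^(\<omega>+1) gathers the letters
  of T at the end: u ~ u_{-T} a1^(|u|_a1 + \<omega>) ... an^(|u|_an + \<omega>), and this normal form only
  depends on u_{-T} and on the counts |u|_a modulo \<omega>.  If v \<in> L and u_{-T} = x v_{-T} z, then the
  word W = x v z a1^(r1) ... an^(rn) is in L by the second half of (A), and for suitable ri it has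
  the same normal form as u; hence u \<in> L.

  (C) implies (A).  Every letter of x^(1+\<omega>+p\<omega>) ~ x^(\<omega>+1) is heavy, so after erasing the neutral
  letters (C) lets this power commute with any y; and x y z a^((p+1)\<omega>) \<in> L by (C) directly.
  (B) and (C) are the same condition written with and without Cond.
*)
theory Submission
  imports Defs "HOL-Library.FuncSet"
begin

section \<open>The syntactic congruence of a regular language\<close>

lemma syn_equiv_refl [simp]: "syn_equiv L u u"
  by (simp add: syn_equiv_def)

lemma syn_equiv_sym: "syn_equiv L u v \<Longrightarrow> syn_equiv L v u"
  by (simp add: syn_equiv_def)

lemma syn_equiv_trans [trans]: "syn_equiv L u v \<Longrightarrow> syn_equiv L v x \<Longrightarrow> syn_equiv L u x"
  by (simp add: syn_equiv_def)

lemma syn_equiv_append_context: "syn_equiv L u v \<Longrightarrow> syn_equiv L (s @ u @ t) (s @ v @ t)"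
  unfolding syn_equiv_def by (metis append.assoc)

lemma syn_equiv_append_right: "syn_equiv L u u' \<Longrightarrow> syn_equiv L (u @ v) (u' @ v)"
  using syn_equiv_append_context[of L u u' "[]" v] by simp

lemma syn_equiv_append_left: "syn_equiv L v v' \<Longrightarrow> syn_equiv L (u @ v) (u @ v')"
  using syn_equiv_append_context[of L v v' u "[]"] by simp

lemma syn_equiv_append: "syn_equiv L u u' \<Longrightarrow> syn_equiv L v v' \<Longrightarrow> syn_equiv L (u @ v) (u' @ v')"
  by (rule syn_equiv_trans[OF syn_equiv_append_right syn_equiv_append_left])

lemma syn_equiv_mem_iff: "syn_equiv L u v \<Longrightarrow> u \<in> L \<longleftrightarrow> v \<in> L"
  unfolding syn_equiv_def by (metis append.left_neutral append_Nil2)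

definition syn_class :: "'a list set \<Rightarrow> 'a list \<Rightarrow> 'a list set" where
  "syn_class L u = {v. syn_equiv L u v}"

lemma syn_class_eq_iff: "syn_class L u = syn_class L v \<longleftrightarrow> syn_equiv L u v"
  unfolding syn_class_def syn_equiv_def by auto

lemma regular_finite_syn_classes:
  assumes "regular L"
  shows "finite (range (syn_class L))"
proof -
  obtain Q q0 and \<delta> :: "nat \<Rightarrow> 'a \<Rightarrow> nat" and F
    where Q: "finite Q" "q0 \<in> Q" "\<forall>q\<in>Q. \<forall>c. \<delta> q c \<in> Q"
    and L: "L = {w. foldl \<delta> q0 w \<in> F}"
    using assms unfolding regular_def by blast
  have run_in: "q \<in> Q \<Longrightarrow> foldl \<delta> q u \<in> Q" for q u
    using Q(3) by (induction u arbitrary: q) auto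
  define run where "run u = restrict (\<lambda>q. foldl \<delta> q u) Q" for u
  have "syn_equiv L u v" if "run u = run v" for u v
    unfolding syn_equiv_def L
    using fun_cong[OF that, of "foldl \<delta> q0 _"] run_in[OF Q(2)] by (simp add: run_def)
  then have "syn_class L u = syn_class L (inv run (run u))" for u
    by (simp add: syn_class_eq_iff f_inv_into_f syn_equiv_sym)
  moreover have "run u \<in> Q \<rightarrow>\<^sub>E Q" for u
    using run_in by (auto simp: run_def)
  ultimately have "range (syn_class L) \<subseteq> (\<lambda>f. syn_class L (inv run f)) ` (Q \<rightarrow>\<^sub>E Q)"
    by blast
  then show ?thesis
    using Q(1) by (meson finite_PiE finite_imageI finite_subset)
qed

lemma syn_equiv_pigeonhole:
  fixes g :: "nat \<Rightarrow> 'a list"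
  assumes "finite (range (syn_class L))" "finite I" "card (range (syn_class L)) < card I"
  shows "\<exists>i\<in>I. \<exists>j\<in>I. i < j \<and> syn_equiv L (g i) (g j)"
proof -
  have "\<not> inj_on (syn_class L \<circ> g) I"
    using card_inj_on_le[of "syn_class L \<circ> g" I "range (syn_class L)"] assms by auto
  then obtain i j where ij: "i \<in> I" "j \<in> I" "i \<noteq> j" "syn_equiv L (g i) (g j)"
    unfolding inj_on_def by (auto simp: syn_class_eq_iff)
  show ?thesis
  proof (cases "i < j")
    case False
    then show ?thesis
      using ij syn_equiv_sym[OF ij(4)] by (metis linorder_neqE_nat)
  qed (use ij in blast)
qed

lemma syn_equiv_loop:
  assumes fin: "finite (range (syn_class L))" and long: "card (range (syn_class L)) < count_list u a"
  obtains P k R where "u = P @ (a # k) @ R" "syn_equiv L P (P @ a # k)"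
proof -
  define I where "I = {i. i < length u \<and> a = u ! i}"
  have "finite I"
    by (simp add: I_def)
  moreover have "card I = count_list u a"
    by (simp add: I_def count_list_eq_length_filter length_filter_conv_card)
  ultimately obtain i j where ij: "i \<in> I" "j \<in> I" "i < j" "syn_equiv L (take i u) (take j u)"
    using syn_equiv_pigeonhole[OF fin, of I "\<lambda>i. take i u"] long by auto
  define k where "k = take (j - Suc i) (drop (Suc i) u)"
  have "drop i u = a # drop (Suc i) u"
    using ij(1) Cons_nth_drop_Suc[of i u] by (simp add: I_def)
  then have "take (j - i) (drop i u) = a # k"
    unfolding k_def Suc_diff_Suc[OF ij(3), symmetric] by simp
  then have take_j: "take j u = take i u @ a # k"
    using ij(3) take_add[of i "j - i" u] by simp
  then have "u = take i u @ (a # k) @ drop j u"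
    using append_take_drop_id[of j u] by simp
  then show thesis
    using that ij(4) take_j by simp
qed

section \<open>Powers and idempotent powers\<close>

lemma wpow_0 [simp]: "wpow x 0 = []"
  by (simp add: wpow_def)

lemma wpow_Suc: "wpow x (Suc n) = x @ wpow x n"
  by (simp add: wpow_def)

lemma wpow_add: "wpow x (m + n) = wpow x m @ wpow x n"
  by (simp add: wpow_def replicate_add)

lemma wpow_Suc': "wpow x (Suc n) = wpow x n @ x"
  by (induction n) (simp_all add: wpow_Suc)

lemma wpow_mult: "wpow x (m * n) = wpow (wpow x m) n"
  by (induction n) (simp_all add: wpow_def replicate_add)

lemma replicate_eq_wpow: "replicate n a = wpow [a] n"
  by (induction n) (simp_all add: wpow_Suc)

lemma count_list_wpow: "count_list (wpow x n) a = n * count_list x a"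
  by (induction n) (simp_all add: wpow_Suc)

lemma set_wpow: "set (wpow x n) = (if n = 0 then {} else set x)"
  by (induction n) (auto simp: wpow_Suc)

lemma syn_equiv_wpow_periodic:
  assumes "syn_equiv L (wpow x i) (wpow x (i + d))" "i \<le> m"
  shows "syn_equiv L (wpow x (m + t * d)) (wpow x m)"
proof (induction t)
  case (Suc t)
  have "syn_equiv L (wpow x (i + d) @ wpow x (m - i + t * d)) (wpow x i @ wpow x (m - i + t * d))"
    using syn_equiv_sym[OF assms(1)] by (rule syn_equiv_append_right)
  then have "syn_equiv L (wpow x (m + Suc t * d)) (wpow x (m + t * d))"
    using assms(2) by (simp add: wpow_add[symmetric] algebra_simps)
  from syn_equiv_trans[OF this Suc] show ?case .
qed simp

lemma finite_syn_classes_idempotent_power: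
  assumes fin: "finite (range (syn_class L))"
  shows "\<exists>n>0. \<forall>x. syn_equiv L (wpow x n @ wpow x n) (wpow x n)"
proof -
  \<comment> \<open>The powers of x are eventually periodic with period at most K, which divides K!.\<close>
  define K where "K = card (range (syn_class L))"
  have "syn_equiv L (wpow x (fact K) @ wpow x (fact K)) (wpow x (fact K))" for x
  proof -
    obtain i j where ij: "i < j" "j \<le> K" "syn_equiv L (wpow x i) (wpow x j)"
      using syn_equiv_pigeonhole[OF fin, of "{0..K}" "wpow x"] by (auto simp: K_def)
    then have "j - i dvd fact K"
      by (intro dvd_fact) auto
    then obtain t where t: "fact K = (j - i) * t" ..
    have "i \<le> fact K"
      using ij fact_ge_self[of K] by linarith
    then have "syn_equiv L (wpow x (fact K + t * (j - i))) (wpow x (fact K))"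
      using ij by (intro syn_equiv_wpow_periodic[of L x i "j - i"]) simp_all
    then show ?thesis
      by (simp add: wpow_add[symmetric] t mult.commute)
  qed
  then show ?thesis
    using fact_gt_zero[of K] by blast
qed

locale idempotent_power =
  fixes L :: "'a list set" and w :: nat
  assumes power_pos: "0 < w"
    and power_idem: "\<And>x. syn_equiv L (wpow x w @ wpow x w) (wpow x w)"

lemma regular_idempotent_power:
  assumes "regular L"
  shows "idempotent_power L (syn_omega L)"
  using someI_ex[OF finite_syn_classes_idempotent_power[OF regular_finite_syn_classes[OF assms]]]
  unfolding idempotent_power_def syn_omega_def by blast

context idempotent_power
begin

lemma wpow_mult_idem: "0 < k \<Longrightarrow> syn_equiv L (wpow x (k * w)) (wpow x w)"
proof (induction k)
  case (Suc k)
  show ?case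
  proof (cases "k = 0")
    case False
    then have "syn_equiv L (wpow x w @ wpow x (k * w)) (wpow x w @ wpow x w)"
      using Suc by (intro syn_equiv_append_left) simp
    from syn_equiv_trans[OF this power_idem] show ?thesis
      by (simp add: wpow_add)
  qed simp
qed simp

lemma wpow_shift: "syn_equiv L (wpow x (n + w + k * w)) (wpow x (n + w))"
proof -
  have "syn_equiv L (wpow x n @ wpow x (Suc k * w)) (wpow x n @ wpow x w)"
    by (intro syn_equiv_append_left wpow_mult_idem) simp
  then show ?thesis
    by (simp add: wpow_add[symmetric] algebra_simps)
qed

lemma wpow_mod_cong:
  assumes "m mod w = n mod w"
  shows "syn_equiv L (wpow x (m + w)) (wpow x (n + w))"
proof -
  have shift: "syn_equiv L (wpow x (m + w)) (wpow x (n + w))" if "m \<le> n" "m mod w = n mod w" for m n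
  proof -
    have "w dvd n - m"
      using mod_eq_dvd_iff_nat[OF \<open>m \<le> n\<close>, of w] that(2) by simp
    then obtain k where "n - m = w * k" ..
    then have "n = m + k * w"
      using \<open>m \<le> n\<close> by (simp add: ac_simps)
    then show ?thesis
      using wpow_shift[of x m k] by (simp add: syn_equiv_sym algebra_simps)
  qed
  show ?thesis
  proof (cases "m \<le> n")
    case False
    show ?thesis
      by (rule syn_equiv_sym[OF shift]) (use False assms in simp_all)
  qed (rule shift[OF _ assms])
qed

end

section \<open>Erasing letters and central words\<close>

lemma erase_append [simp]: "erase S (u @ v) = erase S u @ erase S v"
  by (simp add: erase_def)

lemma erase_Nil [simp]: "erase S [] = []"
  by (simp add: erase_def)

lemma erase_Cons: "erase S (c # u) = (if c \<in> S then erase S u else c # erase S u)"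
  by (simp add: erase_def)

lemma erase_erase [simp]: "erase S (erase T u) = erase (S \<union> T) u"
  by (simp add: erase_def conj_commute)

lemma set_erase: "set (erase S u) = set u - S"
  by (auto simp: erase_def)

lemma erase_eq_Nil_iff: "erase S u = [] \<longleftrightarrow> set u \<subseteq> S"
  by (auto simp: erase_def filter_empty_conv)

lemma erase_id: "set u \<inter> S = {} \<Longrightarrow> erase S u = u"
  by (auto simp: erase_def intro: filter_True)

lemma count_list_erase: "c \<notin> S \<Longrightarrow> count_list (erase S u) c = count_list u c"
  by (induction u) (auto simp: erase_Cons)

lemma mem_iff_erase_neutral: "u \<in> L \<longleftrightarrow> erase {e. neutral L e} u \<in> L"
proof -
  have "s @ u \<in> L \<longleftrightarrow> s @ erase {e. neutral L e} u \<in> L" for s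
  proof (induction u arbitrary: s)
    case (Cons c u)
    then show ?case
      using Cons[of "s @ [c]"] by (auto simp: erase_Cons neutral_def)
  qed simp
  from this[of "[]"] show ?thesis
    by simp
qed

definition central :: "'a list set \<Rightarrow> 'a list \<Rightarrow> bool" where
  "central L c \<longleftrightarrow> (\<forall>y. syn_equiv L (y @ c) (c @ y))"

lemma centralD: "central L c \<Longrightarrow> syn_equiv L (y @ c) (c @ y)"
  by (simp add: central_def)

lemma centralD': "central L c \<Longrightarrow> syn_equiv L (c @ y) (y @ c)"
  by (simp add: central_def syn_equiv_sym)

lemma central_wpow: "central L c \<Longrightarrow> central L (wpow c n)"
proof (induction n)
  case (Suc n)
  show ?case
    unfolding central_def
  proof
    fix y
    have "syn_equiv L (y @ c @ wpow c n) (c @ y @ wpow c n)"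
      using syn_equiv_append_right[OF centralD[OF Suc.prems, of y], of "wpow c n"] by simp
    also have "syn_equiv L (c @ y @ wpow c n) (c @ wpow c n @ y)"
      using syn_equiv_append_left[OF centralD[OF Suc.IH[OF Suc.prems], of y], of c] by simp
    finally show "syn_equiv L (y @ wpow c (Suc n)) (wpow c (Suc n) @ y)"
      by (simp add: wpow_Suc)
  qed
qed (simp add: central_def)

lemma central_syn_equiv:
  assumes "central L c" "syn_equiv L c d"
  shows "central L d"
  unfolding central_def
proof
  fix y
  have "syn_equiv L (y @ d) (y @ c)"
    using syn_equiv_sym[OF assms(2)] by (rule syn_equiv_append_left)
  also have "syn_equiv L \<dots> (c @ y)"
    using assms(1) by (rule centralD)
  also have "syn_equiv L \<dots> (d @ y)"
    using assms(2) by (rule syn_equiv_append_right)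
  finally show "syn_equiv L (y @ d) (d @ y)" .
qed

lemma central_idempotent_absorb:
  assumes "central L e" "syn_equiv L (e @ e) e"
  shows "syn_equiv L ((s @ e @ t) @ e) (s @ e @ t)"
proof -
  have "syn_equiv L ((s @ e @ t) @ e) (s @ e @ e @ t)"
    using syn_equiv_append_left[OF centralD[OF assms(1), of t], of "s @ e"] by simp
  also have "syn_equiv L (s @ e @ e @ t) (s @ e @ t)"
    using syn_equiv_append_context[OF assms(2), of s t] by simp
  finally show ?thesis .
qed

lemma central_absorb_wpow_wpow:
  assumes "central L e" "syn_equiv L (e @ b @ r) e"
  shows "syn_equiv L (e @ wpow b n @ wpow r n) e"
proof (induction n)
  case (Suc n)
  have "e @ wpow b (Suc n) @ wpow r (Suc n) = (e @ wpow b n) @ (b @ r) @ wpow r n"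
    unfolding wpow_Suc'[of b] wpow_Suc[of r] by simp
  also have "syn_equiv L \<dots> (wpow b n @ (e @ b @ r) @ wpow r n)"
    using syn_equiv_append_right[OF centralD'[OF assms(1), of "wpow b n"], of "(b @ r) @ wpow r n"]
    by simp
  also have "syn_equiv L \<dots> (wpow b n @ e @ wpow r n)"
    by (rule syn_equiv_append_context[OF assms(2)])
  also have "syn_equiv L \<dots> (e @ wpow b n @ wpow r n)"
    using syn_equiv_append_right[OF centralD[OF assms(1), of "wpow b n"], of "wpow r n"] by simp
  also have "syn_equiv L \<dots> e"
    by (rule Suc)
  finally show ?case .
qed simp

definition blocks :: "('a \<Rightarrow> nat) \<Rightarrow> 'a list \<Rightarrow> 'a list" where
  "blocks r ts = concat (map (\<lambda>a. replicate (r a) a) ts)"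

lemma blocks_Nil [simp]: "blocks r [] = []"
  by (simp add: blocks_def)

lemma blocks_Cons [simp]: "blocks r (a # ts) = replicate (r a) a @ blocks r ts"
  by (simp add: blocks_def)

lemma blocks_append: "blocks r (ts @ ts') = blocks r ts @ blocks r ts'"
  by (simp add: blocks_def)

lemma set_blocks: "set (blocks r ts) \<subseteq> set ts"
  by (auto simp: blocks_def)

lemma count_list_replicate [simp]: "count_list (replicate n b) a = (if b = a then n else 0)"
  by (induction n) auto

lemma count_list_blocks:
  "distinct ts \<Longrightarrow> count_list (blocks r ts) a = (if a \<in> set ts then r a else 0)"
  by (induction ts) auto

lemma blocks_split:
  assumes "a \<in> set ts" "w \<le> r a"
  obtains s t where "blocks r ts = s @ replicate w a @ t"
proof -
  obtain ts1 ts2 where "ts = ts1 @ a # ts2"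
    using split_list[OF assms(1)] by blast
  then have "blocks r ts = (blocks r ts1 @ replicate (r a - w) a) @ replicate w a @ blocks r ts2"
    using assms(2) by (simp add: blocks_append replicate_add[symmetric])
  then show thesis
    by (rule that)
qed

lemma syn_equiv_blocks:
  assumes "\<forall>a\<in>set ts. syn_equiv L (replicate (r a) a) (replicate (r' a) a)"
  shows "syn_equiv L (blocks r ts) (blocks r' ts)"
  using assms
proof (induction ts)
  case (Cons a ts)
  then show ?case
    by (simp only: blocks_Cons) (rule syn_equiv_append; simp)
qed simp

definition pad_closed :: "'a list set \<Rightarrow> nat \<Rightarrow> bool" where
  "pad_closed L w \<longleftrightarrow> (\<forall>x y z a. \<not> neutral L a \<longrightarrow> y \<in> L \<longrightarrow> x @ y @ z @ replicate w a \<in> L)"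

lemma pad_closed_blocks:
  assumes closed: "pad_closed L w"
    and "y \<in> L" "ts \<noteq> []" "\<forall>a\<in>set ts. \<not> neutral L a \<and> w \<le> r a"
  shows "x @ y @ z @ blocks r ts \<in> L"
  using assms(3,4)
proof (induction ts arbitrary: z)
  case (Cons a ts)
  show ?case
  proof (cases "ts = []")
    case True
    have "\<not> neutral L a"
      using Cons.prems(2) by simp
    from closed[unfolded pad_closed_def, rule_format, OF this \<open>y \<in> L\<close>]
    have "x @ y @ (z @ replicate (r a - w) a) @ replicate w a \<in> L" .
    then show ?thesis
      using True Cons.prems(2) by (simp add: replicate_add[symmetric])
  next
    case False
    then show ?thesis
      using Cons.IH[of "z @ replicate (r a) a"] Cons.prems(2) by simp
  qed
qed simp

section \<open>Normal forms when the powers x^(\<omega>+1) are central\<close>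

locale omega_succ_central = idempotent_power +
  assumes central_wpow_succ: "central L (wpow x (w + 1))"
begin

lemma central_wpow_ge:
  assumes "w \<le> m"
  shows "central L (wpow x m)"
proof -
  define n where "n = m - w"
  then have m: "m = n + w"
    using assms by simp
  have "central L (wpow (wpow x (w + 1)) m)"
    using central_wpow_succ by (rule central_wpow)
  also have "wpow (wpow x (w + 1)) m = wpow x (n + w + m * w)"
    unfolding wpow_mult[symmetric] m by (simp add: algebra_simps)
  finally show ?thesis
    unfolding m by (rule central_syn_equiv[OF _ wpow_shift])
qed

lemma central_replicate: "w \<le> m \<Longrightarrow> central L (replicate m a)"
  unfolding replicate_eq_wpow by (rule central_wpow_ge)

lemma replicate_idem: "syn_equiv L (replicate w a @ replicate w a) (replicate w a)"
  unfolding replicate_eq_wpow by (rule power_idem)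

lemma replicate_factor_absorbs:
  "syn_equiv L ((s @ replicate w a @ t) @ replicate w a) (s @ replicate w a @ t)"
  by (rule central_idempotent_absorb[OF central_replicate[OF order.refl] replicate_idem])

lemma central_absorbs_wpow:
  assumes e: "central L e" and ebr: "syn_equiv L (e @ b @ r) e"
  shows "syn_equiv L (e @ wpow b w) e"
proof -
  have b: "central L (wpow b w)"
    by (rule central_wpow_ge) simp
  have ebr_w: "syn_equiv L (e @ wpow b w @ wpow r w) e"
    using e ebr by (rule central_absorb_wpow_wpow)
  have "syn_equiv L (e @ wpow b w) ((e @ wpow b w @ wpow r w) @ wpow b w)"
    using syn_equiv_sym[OF ebr_w] by (rule syn_equiv_append_right)
  also have "syn_equiv L \<dots> ((e @ wpow b w) @ wpow b w @ wpow r w)"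
    using syn_equiv_append_left[OF centralD[OF b, of "wpow r w"], of "e @ wpow b w"] by simp
  also have "syn_equiv L \<dots> (e @ wpow b w @ wpow r w)"
    using syn_equiv_append_context[OF power_idem[of b], of e "wpow r w"] by simp
  also have "syn_equiv L \<dots> e"
    by (rule ebr_w)
  finally show ?thesis .
qed

lemma loop_absorbs_replicate:
  assumes loop: "syn_equiv L P (P @ a # k)"
  shows "syn_equiv L ((P @ a # k @ R) @ replicate w a) (P @ a # k @ R)"
proof -
  define e where "e = wpow (a # k) w"
  have e: "central L e"
    unfolding e_def by (rule central_wpow_ge) simp
  obtain n where n: "w = Suc n"
    using power_pos gr0_implies_Suc by blast
  have "[a] @ k @ wpow (a # k) n = e"
    by (simp add: e_def n wpow_Suc)
  then have "syn_equiv L (e @ [a] @ k @ wpow (a # k) n) e"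
    using power_idem[of "a # k"] by (simp add: e_def)
  then have e_absorbs: "syn_equiv L (e @ replicate w a) e"
    unfolding replicate_eq_wpow by (rule central_absorbs_wpow[OF e])
  have "syn_equiv L P (P @ wpow (a # k) n)" for n
  proof (induction n)
    case (Suc n)
    have "syn_equiv L (P @ wpow (a # k) n) ((P @ a # k) @ wpow (a # k) n)"
      using loop by (rule syn_equiv_append_right)
    from syn_equiv_trans[OF Suc this] show ?case
      by (simp add: wpow_Suc)
  qed simp
  then have "syn_equiv L (P @ a # k @ R) ((P @ e) @ a # k @ R)"
    unfolding e_def by (rule syn_equiv_append_right)
  also have "syn_equiv L \<dots> ((P @ a # k @ R) @ e)"
    using syn_equiv_append_left[OF centralD'[OF e, of "a # k @ R"], of P] by simp
  finally have absorbs_e: "syn_equiv L (P @ a # k @ R) ((P @ a # k @ R) @ e)" .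
  have "syn_equiv L ((P @ a # k @ R) @ replicate w a) (((P @ a # k @ R) @ e) @ replicate w a)"
    using absorbs_e by (rule syn_equiv_append_right)
  also have "syn_equiv L \<dots> ((P @ a # k @ R) @ e)"
    using syn_equiv_append_left[OF e_absorbs, of "P @ a # k @ R"] by simp
  also have "syn_equiv L \<dots> (P @ a # k @ R)"
    using absorbs_e by (rule syn_equiv_sym)
  finally show ?thesis .
qed

lemma frequent_letter_absorbs:
  assumes fin: "finite (range (syn_class L))" and long: "card (range (syn_class L)) < count_list u a"
  shows "syn_equiv L (u @ replicate w a) u"
proof -
  obtain P k R where u: "u = P @ (a # k) @ R" and loop: "syn_equiv L P (P @ a # k)"
    using long by (rule syn_equiv_loop[OF fin])
  show ?thesis
    unfolding u using loop_absorbs_replicate[OF loop, of R] by simp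
qed

lemma blocks_absorb_replicate:
  assumes "a \<in> set ts" "w \<le> r a"
  shows "syn_equiv L ((x @ blocks r ts) @ replicate w a) (x @ blocks r ts)"
proof -
  obtain s t where "blocks r ts = s @ replicate w a @ t"
    using assms by (rule blocks_split)
  then show ?thesis
    using replicate_factor_absorbs[of "x @ s" a t] by simp
qed

lemma gather_replicate:
  "syn_equiv L (v @ replicate w a) (erase {a} v @ replicate (count_list v a + w) a)"
proof (induction v)
  case (Cons c v)
  define E where "E = erase {a} v"
  define n where "n = count_list v a"
  show ?case
  proof (cases "c = a")
    case False
    then show ?thesis
      using syn_equiv_append_left[OF Cons, of "[c]"] by (simp add: erase_Cons)
  next
    case True
    have "syn_equiv L ((c # v) @ replicate w a) ([a] @ E @ replicate (n + w) a)"
      using syn_equiv_append_left[OF Cons, of "[a]"] True by (simp add: E_def n_def)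
    also have "syn_equiv L \<dots> ([a] @ replicate (n + w) a @ E)"
      using syn_equiv_append_left[OF centralD[OF central_replicate[OF le_add2], of E], of "[a]"]
      by simp
    also have "[a] @ replicate (n + w) a @ E = replicate (Suc n + w) a @ E"
      by simp
    also have "syn_equiv L \<dots> (E @ replicate (Suc n + w) a)"
      by (rule centralD'[OF central_replicate[OF le_add2]])
    finally show ?thesis
      using True by (simp add: E_def n_def erase_Cons)
  qed
qed simp

lemma syn_equiv_erase_blocks:
  assumes "distinct ts" "\<forall>a\<in>set ts. syn_equiv L (u @ replicate w a) u"
  shows "syn_equiv L u (erase (set ts) u @ blocks (\<lambda>a. count_list u a + w) ts)"
  using assms
proof (induction ts)
  case (Cons a ts)
  define S where "S = set ts"
  define B where "B = blocks (\<lambda>a. count_list u a + w) ts"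
  have "syn_equiv L u (u @ replicate w a)"
    using Cons.prems(2) by (simp add: syn_equiv_sym)
  also have "syn_equiv L \<dots> ((erase S u @ B) @ replicate w a)"
    using Cons unfolding S_def B_def by (intro syn_equiv_append_right) simp
  also have "syn_equiv L \<dots> (erase S u @ replicate w a @ B)"
    using syn_equiv_append_left[OF centralD[OF central_replicate[OF order.refl], of B], of "erase S u"] by simp
  also have "syn_equiv L \<dots> ((erase {a} (erase S u) @ replicate (count_list (erase S u) a + w) a) @ B)"
    using syn_equiv_append_right[OF gather_replicate[of "erase S u" a], of B] by simp
  also have "\<dots> = erase (set (a # ts)) u @ blocks (\<lambda>a. count_list u a + w) (a # ts)"
    using Cons.prems(1) by (simp add: S_def B_def count_list_erase)
  finally show ?case .
qed (simp add: erase_def)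

lemma syn_equiv_if_erase_eq_count_mod_eq:
  assumes "distinct ts"
    and "\<forall>a\<in>set ts. syn_equiv L (u @ replicate w a) u" "\<forall>a\<in>set ts. syn_equiv L (v @ replicate w a) v"
    and "erase (set ts) u = erase (set ts) v"
    and "\<forall>a\<in>set ts. count_list u a mod w = count_list v a mod w"
  shows "syn_equiv L u v"
proof -
  have "syn_equiv L u (erase (set ts) u @ blocks (\<lambda>a. count_list u a + w) ts)"
    using assms(1,2) by (rule syn_equiv_erase_blocks)
  also have "syn_equiv L \<dots> (erase (set ts) v @ blocks (\<lambda>a. count_list v a + w) ts)"
    unfolding assms(4) using assms(5)
    by (intro syn_equiv_append_left syn_equiv_blocks) (simp add: replicate_eq_wpow wpow_mod_cong)
  also have "syn_equiv L \<dots> v"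
    using syn_equiv_erase_blocks[OF assms(1,3)] by (rule syn_equiv_sym)
  finally show ?thesis .
qed

lemma padded_witness:
  assumes closed: "pad_closed L w" and ts: "distinct ts" "ts \<noteq> []" "\<forall>a\<in>set ts. \<not> neutral L a"
    and v: "v \<in> L" and u_erase: "erase (set ts) u = x @ erase (set ts) v @ z"
  obtains W where "W \<in> L" "\<forall>a\<in>set ts. syn_equiv L (W @ replicate w a) W"
    "erase (set ts) u = erase (set ts) W" "\<forall>a\<in>set ts. count_list u a mod w = count_list W a mod w"
proof -
  have xz_disjoint: "set x \<inter> set ts = {}" "set z \<inter> set ts = {}"
    using arg_cong[OF u_erase, of set] by (auto simp: set_erase)
  then have xz: "erase (set ts) x = x" "erase (set ts) z = z"
    by (simp_all add: erase_id)
  \<comment> \<open>r is chosen so that the count of a in W is congruent to its count in u modulo w.\<close>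
  define r where "r a = count_list u a + (w - 1) * count_list v a + w" for a
  define W where "W = x @ v @ z @ blocks r ts"
  have "W \<in> L"
    unfolding W_def using ts(2,3) by (intro pad_closed_blocks[OF closed v]) (auto simp: r_def)
  moreover have "\<forall>a\<in>set ts. syn_equiv L (W @ replicate w a) W"
  proof
    fix a
    assume "a \<in> set ts"
    moreover have "w \<le> r a"
      by (simp add: r_def)
    ultimately show "syn_equiv L (W @ replicate w a) W"
      using blocks_absorb_replicate[of a ts r "x @ v @ z"] unfolding W_def by simp
  qed
  moreover have "erase (set ts) u = erase (set ts) W"
    using set_blocks[of r ts] unfolding W_def u_erase by (simp add: xz erase_eq_Nil_iff[THEN iffD2])
  moreover have "count_list u a mod w = count_list W a mod w" if "a \<in> set ts" for a
  proof -
    have "a \<notin> set x" "a \<notin> set z"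
      using xz_disjoint that by auto
    then have "count_list W a = count_list u a + (count_list v a + 1) * w"
      using that power_pos ts(1) unfolding W_def
      by (cases w) (simp_all add: count_list_blocks r_def algebra_simps)
    then show ?thesis
      by (metis mod_mult_self1)
  qed
  ultimately show thesis
    using that by blast
qed

lemma mem_if_factor_of_erase_heavy:
  assumes fin: "finite (range (syn_class L))" and closed: "pad_closed L w"
    and T: "finite T" "T \<noteq> {}" "\<forall>a\<in>T. \<not> neutral L a \<and> card (range (syn_class L)) < count_list u a"
    and v: "v \<in> L" "factor (erase T v) (erase T u)"
  shows "u \<in> L"
proof -
  obtain ts where ts: "set ts = T" "distinct ts"
    using finite_distinct_list[OF T(1)] by blast
  have u_absorbs: "\<forall>a\<in>set ts. syn_equiv L (u @ replicate w a) u"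
  proof
    fix a
    assume "a \<in> set ts"
    then have "card (range (syn_class L)) < count_list u a"
      using T(3) unfolding ts(1) by blast
    then show "syn_equiv L (u @ replicate w a) u"
      by (rule frequent_letter_absorbs[OF fin])
  qed
  obtain x z where "erase T u = x @ erase T v @ z"
    using v(2) unfolding factor_def by blast
  moreover have "ts \<noteq> []" "\<forall>a\<in>set ts. \<not> neutral L a"
    using T(2,3) ts(1) by auto
  ultimately obtain W where W: "W \<in> L" "\<forall>a\<in>set ts. syn_equiv L (W @ replicate w a) W"
    "erase (set ts) u = erase (set ts) W" "\<forall>a\<in>set ts. count_list u a mod w = count_list W a mod w"
    using padded_witness[OF closed ts(2) _ _ v(1)] unfolding ts(1) by blast
  have "syn_equiv L u W"
    using ts(2) u_absorbs W(2-4) by (rule syn_equiv_if_erase_eq_count_mod_eq)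
  then show ?thesis
    using W(1) syn_equiv_mem_iff by blast
qed

end

section \<open>The three conditions\<close>

text \<open>The set heavy L p u is the set T of the statement; Cond_criterion L p and factor_criterion L p
  are conditions (B) and (C) for a fixed p, and pad_closed L (syn_omega L) is the second half of (A).\<close>

definition heavy :: "'a list set \<Rightarrow> nat \<Rightarrow> 'a list \<Rightarrow> 'a set" where
  "heavy L p u = {a. \<not> neutral L a \<and> p \<le> count_list u a}"

definition Cond_criterion :: "'a list set \<Rightarrow> nat \<Rightarrow> bool" where
  "Cond_criterion L p \<longleftrightarrow> (\<forall>u. heavy L p u = {} \<or>
     (erase (heavy L p u) u \<in> Cond L (heavy L p u) \<longleftrightarrow> u \<in> L))"

definition factor_criterion :: "'a list set \<Rightarrow> nat \<Rightarrow> bool" where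
  "factor_criterion L p \<longleftrightarrow> (\<forall>u v. v \<in> L \<longrightarrow> heavy L p u \<noteq> {} \<longrightarrow>
     factor (erase (heavy L p u) v) (erase (heavy L p u) u) \<longrightarrow> u \<in> L)"

lemma factor_refl: "factor u u"
  unfolding factor_def by (metis append.left_neutral append_Nil2)

lemma Cond_criterion_iff_factor_criterion: "Cond_criterion L p \<longleftrightarrow> factor_criterion L p"
proof -
  have "erase T u \<in> Cond L T \<longleftrightarrow> (\<exists>v\<in>L. factor (erase T v) (erase T u))" for T :: "'a set" and u
    by (simp add: Cond_def)
  then have "(erase T u \<in> Cond L T \<longleftrightarrow> u \<in> L) \<longleftrightarrow>
      (\<forall>v\<in>L. factor (erase T v) (erase T u) \<longrightarrow> u \<in> L)"
    for T :: "'a set" and u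
    using factor_refl by blast
  then show ?thesis
    unfolding Cond_criterion_def factor_criterion_def by blast
qed

lemma finite_heavy:
  assumes "0 < p"
  shows "finite (heavy L p u)"
proof (rule finite_subset)
  show "heavy L p u \<subseteq> set u"
  proof
    fix a
    assume "a \<in> heavy L p u"
    then have "count_list u a \<noteq> 0"
      using assms by (simp add: heavy_def)
    then show "a \<in> set u"
      by (simp add: count_list_0_iff)
  qed
qed simp

lemma heavy_erase_neutral: "heavy L p (erase {e. neutral L e} u) = heavy L p u"
  by (auto simp: heavy_def count_list_erase)

lemma factor_criterion_permute:
  assumes fc: "factor_criterion L p" and v: "v \<in> L"
    and erase_S: "erase S u = erase S v" and heavy_S: "\<forall>c\<in>S. p \<le> count_list u c"
  shows "u \<in> L"
proof -
  \<comment> \<open>After erasing the neutral letters, the letters of S that are not heavy are gone.\<close>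
  define N where "N = {e. neutral L e}"
  define T where "T = heavy L p u"
  have "S \<subseteq> N \<union> T"
    using heavy_S by (auto simp: N_def T_def heavy_def)
  then have "erase (N \<union> T) u = erase (N \<union> T) v"
    using arg_cong[OF erase_S, of "erase (N \<union> T)"] by (simp add: Un_absorb2)
  then have erase_NT: "erase T (erase N u) = erase T (erase N v)"
    by (simp add: Un_commute)
  have "erase N v \<in> L"
    using v mem_iff_erase_neutral unfolding N_def by blast
  moreover have "heavy L p (erase N u) = T"
    unfolding N_def T_def by (rule heavy_erase_neutral)
  ultimately have "erase N u \<in> L"
  proof (cases "T = {}")
    case True
    then show ?thesis
      using \<open>erase N v \<in> L\<close> erase_NT by (simp add: erase_def)
  next
    case False
    then show ?thesis
      using fc \<open>erase N v \<in> L\<close> \<open>heavy L p (erase N u) = T\<close> erase_NT factor_refl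
      unfolding factor_criterion_def by metis
  qed
  then show ?thesis
    using mem_iff_erase_neutral unfolding N_def by blast
qed

context idempotent_power
begin

lemma factor_criterion_pad_closed:
  assumes fc: "factor_criterion L p"
  shows "pad_closed L w"
  unfolding pad_closed_def
proof (intro allI impI)
  fix x y z a
  assume a: "\<not> neutral L a" and y: "y \<in> L"
  define u where "u = x @ y @ z @ replicate (Suc p * w) a"
  have "p \<le> Suc p * w"
    using power_pos by (simp add: add_increasing)
  then have "a \<in> heavy L p u"
    using a by (simp add: heavy_def u_def)
  moreover have "factor (erase (heavy L p u) y) (erase (heavy L p u) u)"
    unfolding factor_def u_def by auto
  ultimately have "u \<in> L"
    using fc y unfolding factor_criterion_def by blast
  moreover have "syn_equiv L u (x @ y @ z @ replicate w a)"
    unfolding u_def replicate_eq_wpow by (intro syn_equiv_append_left wpow_mult_idem) simp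
  ultimately show "x @ y @ z @ replicate w a \<in> L"
    using syn_equiv_mem_iff by blast
qed

lemma factor_criterion_commute_heavy:
  assumes fc: "factor_criterion L p" and Y: "\<forall>c\<in>set Y. p \<le> count_list Y c"
  shows "syn_equiv L (y @ Y) (Y @ y)"
proof -
  have "erase (set Y) (s @ y @ Y @ t) = erase (set Y) (s @ Y @ y @ t)" for s t
    by (simp add: erase_eq_Nil_iff[THEN iffD2])
  moreover have "\<forall>c\<in>set Y. p \<le> count_list (s @ y @ Y @ t) c \<and> p \<le> count_list (s @ Y @ y @ t) c" for s t
    using Y by (auto intro: le_add2 order.trans)
  ultimately show ?thesis
    unfolding syn_equiv_def using factor_criterion_permute[OF fc] by (metis append.assoc)
qed

lemma factor_criterion_central:
  assumes fc: "factor_criterion L p"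
  shows "central L (wpow x (w + 1))"
  unfolding central_def
proof
  fix y
  define Y where "Y = wpow x (1 + w + p * w)"
  have x_Y: "syn_equiv L (wpow x (w + 1)) Y"
    unfolding Y_def using syn_equiv_sym[OF wpow_shift[of x 1 p]] by simp
  have "p \<le> (1 + w + p * w) * count_list x c" if "c \<in> set x" for c
  proof -
    have "p \<le> 1 + w + p * w"
      using power_pos by (cases w) auto
    also have "\<dots> \<le> (1 + w + p * w) * count_list x c"
      using mult_le_mono2[of 1 "count_list x c" "1 + w + p * w"] that count_list_0_iff[of x c]
      by simp
    finally show ?thesis .
  qed
  then have "\<forall>c\<in>set Y. p \<le> count_list Y c"
    by (simp add: Y_def count_list_wpow set_wpow)
  then have "syn_equiv L (y @ Y) (Y @ y)"
    by (rule factor_criterion_commute_heavy[OF fc])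
  then show "syn_equiv L (y @ wpow x (w + 1)) (wpow x (w + 1) @ y)"
    using syn_equiv_append_left[OF x_Y, of y] syn_equiv_append_right[OF syn_equiv_sym[OF x_Y], of y]
    by (meson syn_equiv_trans)
qed

end

lemma (in omega_succ_central) factor_criterion_if_pad_closed:
  assumes fin: "finite (range (syn_class L))" and closed: "pad_closed L w"
  shows "factor_criterion L (Suc (card (range (syn_class L))))"
  unfolding factor_criterion_def
proof (intro allI impI)
  fix u v
  let ?T = "heavy L (Suc (card (range (syn_class L)))) u"
  assume v: "v \<in> L" and nonempty: "?T \<noteq> {}" and fac: "factor (erase ?T v) (erase ?T u)"
  have "finite ?T"
    by (rule finite_heavy) simp
  moreover have "\<forall>a\<in>?T. \<not> neutral L a \<and> card (range (syn_class L)) < count_list u a"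
    by (auto simp: heavy_def)
  ultimately show "u \<in> L"
    using mem_if_factor_of_erase_heavy[OF fin closed _ nonempty _ v fac] by blast
qed

theorem proposition5p5:
  fixes L :: "('a::finite) list set"
  assumes "regular L"
  shows "(((\<forall>x y. syn_equiv L (y @ wpow x (syn_omega L + 1)) (wpow x (syn_omega L + 1) @ y))
          \<and> (\<forall>x y z a. \<not> neutral L a \<longrightarrow> y \<in> L \<longrightarrow> x @ y @ z @ replicate (syn_omega L) a \<in> L))
     \<longleftrightarrow>
         (\<exists>p::nat. \<forall>u. let T = {a. \<not> neutral L a \<and> count_list u a \<ge> p} in
            T = {} \<or> (erase T u \<in> Cond L T \<longleftrightarrow> u \<in> L))) \<and>
         ((\<exists>p::nat. \<forall>u. let T = {a. \<not> neutral L a \<and> count_list u a \<ge> p} in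
            T = {} \<or> (erase T u \<in> Cond L T \<longleftrightarrow> u \<in> L))
     \<longleftrightarrow>
         (\<exists>p::nat. \<forall>u v. let T = {a. \<not> neutral L a \<and> count_list u a \<ge> p} in
            v \<in> L \<longrightarrow> T \<noteq> {} \<longrightarrow> factor (erase T v) (erase T u) \<longrightarrow> u \<in> L))"
proof -
  have idem: "idempotent_power L (syn_omega L)"
    using assms by (rule regular_idempotent_power)
  interpret idempotent_power L "syn_omega L"
    by (rule idem)
  have "(\<forall>x. central L (wpow x (syn_omega L + 1))) \<and> pad_closed L (syn_omega L)
      \<longleftrightarrow> (\<exists>p. Cond_criterion L p)"
  proof
    assume A: "(\<forall>x. central L (wpow x (syn_omega L + 1))) \<and> pad_closed L (syn_omega L)"
    then interpret omega_succ_central L "syn_omega L"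
      by (intro omega_succ_central.intro idem omega_succ_central_axioms.intro) blast
    have "factor_criterion L (Suc (card (range (syn_class L))))"
      using factor_criterion_if_pad_closed[OF regular_finite_syn_classes[OF assms]] A by blast
    then show "\<exists>p. Cond_criterion L p"
      unfolding Cond_criterion_iff_factor_criterion ..
  next
    assume "\<exists>p. Cond_criterion L p"
    then obtain p where "factor_criterion L p"
      unfolding Cond_criterion_iff_factor_criterion ..
    then show "(\<forall>x. central L (wpow x (syn_omega L + 1))) \<and> pad_closed L (syn_omega L)"
      using factor_criterion_central factor_criterion_pad_closed by blast
  qed
  moreover have "(\<exists>p. Cond_criterion L p) \<longleftrightarrow> (\<exists>p. factor_criterion L p)"
    by (simp add: Cond_criterion_iff_factor_criterion)
  ultimately show ?thesis
    unfolding central_def pad_closed_def Cond_criterion_def factor_criterion_def heavy_def Let_def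
    by (rule conjI)
qed

end
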